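(* Let $N\ge 1$ and let $i,j,k\in\{1,\dots,N\}$. For an $N^3\times N^3$ matrix $\mathbf{M}$ with rows and columns indexed by three-letter words over $\{1,\dots,N\}$, let $\mathbf{M}_{[i,j,k]}$ denote the submatrix consisting of the rows and columns whose labels are rearrangements of the multiset $[i,j,k]$ (in lexicographic order), and let $n$ be the number of such rearrangements. Then for pairwise distinct indices $\alpha,\beta,\gamma$: (a) $(\mathbf{R}_{\beta\alpha}\otimes\mathbf{I}_N)_{[i,j,k]}(\mathbf{R}_{\alpha\beta}\otimes\mathbf{I}_N)_{[i,j,k]}=(\mathbf{I}_N\otimes\mathbf{R}_{\beta\alpha})_{[i,j,k]}(\mathbf{I}_N\otimes\mathbf{R}_{\alpha\beta})_{[i,j,k]}=\mathbf{I}_n$; (b) $(\mathbf{R}_{\gamma\beta}\otimes\mathbf{I}_N)_{[i,j,k]}(\mathbf{I}_N\otimes\mathbf{R}_{\gamma\alpha})_{[i,j,k]}(\mathbf{R}_{\beta\alpha}\otimes\mathbf{I}_N)_{[i,j,k]}=(\mathbf{I}_N\otimes\mathbf{R}_{\beta\alpha})_{[i,j,k]}(\mathbf{R}_{\gamma\alpha}\otimes\mathbf{I}_N)_{[i,j,k]}(\mathbf{I}_N\otimes\mathbf{R}_{\gamma\beta})_{[i,j,k]}$.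
   Context: Fix $0<p<1$, $q=1-p$. For nonzero complex $\xi_\alpha,\xi_\beta$ set $D=p+q\xi_\alpha\xi_\beta-\xi_\alpha$ and $S_{\beta\alpha}=-\frac{p+q\xi_\alpha\xi_\beta-\xi_\beta}{D}$, $P_{\beta\alpha}=\frac{(p-q\xi_\alpha)(\xi_\beta-1)}{D}$, $Q_{\beta\alpha}=\frac{(p-q\xi_\beta)(\xi_\alpha-1)}{D}$, $T_{\beta\alpha}=\frac{\xi_\beta-\xi_\alpha}{D}$. $\mathbf{R}_{\beta\alpha}$ is the $N^2\times N^2$ matrix with rows and columns indexed by two-letter words $ij$ over $\{1,\dots,N\}$ in lexicographic order, with entries $[\mathbf{R}_{\beta\alpha}]_{ij,kl}=S_{\beta\alpha}$ if $kl=ij$, $i=j$; $P_{\beta\alpha}$ if $kl=ij$, $i<j$; $Q_{\beta\alpha}$ if $kl=ij$, $i>j$; $pT_{\beta\alpha}$ if $kl=ji$, $i<j$; $qT_{\beta\alpha}$ if $kl=ji$, $i>j$; and $0$ otherwise. $\otimes$ is the Kronecker product, with rows/columns of $N^3\times N^3$ matrices indexed by three-letter words in lexicographic order. *)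

theory Defs
  imports Complex_Main "HOL-Library.List_Lexorder" "Jordan_Normal_Form.Matrix"
begin

text \<open>Two-letter words ij and three-letter words ijk over {1..N} are represented as
  lists of naturals; an N^2 x N^2 (resp. N^3 x N^3) matrix is represented by its entry
  function on words.  Lists are ordered lexicographically (List_Lexorder).\<close>

definition Dden :: "real \<Rightarrow> complex \<Rightarrow> complex \<Rightarrow> complex" where
  "Dden p xb xa = of_real p + of_real (1 - p) * xa * xb - xa"

definition Scoef :: "real \<Rightarrow> complex \<Rightarrow> complex \<Rightarrow> complex" where
  "Scoef p xb xa = - (of_real p + of_real (1 - p) * xa * xb - xb) / Dden p xb xa"

definition Pcoef :: "real \<Rightarrow> complex \<Rightarrow> complex \<Rightarrow> complex" where
  "Pcoef p xb xa = (of_real p - of_real (1 - p) * xa) * (xb - 1) / Dden p xb xa"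

definition Qcoef :: "real \<Rightarrow> complex \<Rightarrow> complex \<Rightarrow> complex" where
  "Qcoef p xb xa = (of_real p - of_real (1 - p) * xb) * (xa - 1) / Dden p xb xa"

definition Tcoef :: "real \<Rightarrow> complex \<Rightarrow> complex \<Rightarrow> complex" where
  "Tcoef p xb xa = (xb - xa) / Dden p xb xa"

text \<open>The R-matrix R_{beta alpha} (with xb = xi_beta, xa = xi_alpha), entry at row ij, column kl.\<close>
definition Rmat :: "real \<Rightarrow> complex \<Rightarrow> complex \<Rightarrow> nat list \<Rightarrow> nat list \<Rightarrow> complex" where
  "Rmat p xb xa w v =
     (let i = w ! 0; j = w ! 1 in
      if v = w then (if i = j then Scoef p xb xa else if i < j then Pcoef p xb xa else Qcoef p xb xa)
      else if v = [j, i] then (if i < j then of_real p * Tcoef p xb xa else of_real (1 - p) * Tcoef p xb xa)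
      else 0)"

definition kron_I_right :: "(nat list \<Rightarrow> nat list \<Rightarrow> complex) \<Rightarrow> nat list \<Rightarrow> nat list \<Rightarrow> complex" where
  "kron_I_right M w v = (if w ! 2 = v ! 2 then M (take 2 w) (take 2 v) else 0)"

definition kron_I_left :: "(nat list \<Rightarrow> nat list \<Rightarrow> complex) \<Rightarrow> nat list \<Rightarrow> nat list \<Rightarrow> complex" where
  "kron_I_left M w v = (if w ! 0 = v ! 0 then M (drop 1 w) (drop 1 v) else 0)"

definition rearr :: "nat \<Rightarrow> nat \<Rightarrow> nat \<Rightarrow> nat list list" where
  "rearr i j k = sorted_list_of_set {w. mset w = {#i, j, k#}}"

definition submat3 :: "(nat list \<Rightarrow> nat list \<Rightarrow> complex) \<Rightarrow> nat \<Rightarrow> nat \<Rightarrow> nat \<Rightarrow> complex mat" where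
  "submat3 M i j k = (let L = rearr i j k in
     mat (length L) (length L) (\<lambda>(r, c). M (L ! r) (L ! c)))"

end

theory Submission
  imports Defs
begin

(* Writing R = R_numer / D with polynomial entries, both identities become identities between
  products of numerator blocks up to scalar factors, which cancel (for unitarity, the product
  of the two denominators is what the numerator blocks multiply to).  A block depends on i, j, k
  only through their relative order, so there are four shapes (pairwise distinct, a repeated
  smaller or larger letter, all equal), and in each the polynomial identities are verified by
  direct computation. *)

definition R_numer :: "complex \<Rightarrow> complex \<Rightarrow> complex \<Rightarrow> nat list \<Rightarrow> nat list \<Rightarrow> complex" where
  "R_numer p y x w v =
     (let i = w ! 0; j = w ! 1 in
      if v = w then
        (if i = j then y - p - (1 - p) * x * y
         else if i < j then (p - (1 - p) * x) * (y - 1)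
         else (p - (1 - p) * y) * (x - 1))
      else if v = [j, i] then (if i < j then p * (y - x) else (1 - p) * (y - x))
      else 0)"

definition R_denom :: "complex \<Rightarrow> complex \<Rightarrow> complex \<Rightarrow> complex" where
  "R_denom p y x = p + (1 - p) * x * y - x"

lemma Rmat_eq_R_numer_div: "Rmat p y x w v = R_numer (of_real p) y x w v / Dden p y x"
  unfolding Rmat_def R_numer_def Let_def Scoef_def Pcoef_def Qcoef_def Tcoef_def
  by (simp add: of_real_diff minus_divide_left)

lemma Dden_eq_R_denom: "Dden p y x = R_denom (of_real p) y x"
  by (simp add: Dden_def R_denom_def of_real_diff)

lemma R_numer_Cons_Cons [simp]:
  "R_numer p y x [i, j] [i', j'] =
     (if i' = i \<and> j' = j then
        (if i = j then y - p - (1 - p) * x * y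
         else if i < j then (p - (1 - p) * x) * (y - 1)
         else (p - (1 - p) * y) * (x - 1))
      else if i' = j \<and> j' = i then (if i < j then p * (y - x) else (1 - p) * (y - x))
      else 0)"
  by (simp add: R_numer_def)

lemma kron_I_right_Cons3 [simp]:
  "kron_I_right M [a, b, c] [a', b', c'] = (if c = c' then M [a, b] [a', b'] else 0)"
  by (simp add: kron_I_right_def)

lemma kron_I_left_Cons3 [simp]:
  "kron_I_left M [a, b, c] [a', b', c'] = (if a = a' then M [b, c] [b', c'] else 0)"
  by (simp add: kron_I_left_def)

definition word_mat :: "(nat list \<Rightarrow> nat list \<Rightarrow> complex) \<Rightarrow> nat list list \<Rightarrow> complex mat" where
  "word_mat K L = mat (length L) (length L) (\<lambda>(r, c). K (L ! r) (L ! c))"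

lemma submat3_eq_word_mat: "submat3 M i j k = word_mat M (rearr i j k)"
  by (simp add: submat3_def word_mat_def Let_def)

lemma word_mat_carrier [simp]: "word_mat K L \<in> carrier_mat (length L) (length L)"
  by (simp add: word_mat_def)

lemma word_mat_eq_iff:
  "word_mat K L = word_mat K' L \<longleftrightarrow> (\<forall>w\<in>set L. \<forall>v\<in>set L. K w v = K' w v)"
  unfolding word_mat_def mat_eq_iff by (auto simp: all_set_conv_all_nth)

lemma word_mat_mult:
  "word_mat K L * word_mat K' L = word_mat (\<lambda>w v. \<Sum>u\<leftarrow>L. K w u * K' u v) L"
  by (rule eq_matI) (auto simp: word_mat_def scalar_prod_def sum_list_sum_nth atLeast0LessThan)

lemma smult_word_mat: "c \<cdot>\<^sub>m word_mat K L = word_mat (\<lambda>w v. c * K w v) L"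
  by (rule eq_matI) (auto simp: word_mat_def)

lemma one_mat_eq_word_mat:
  "distinct L \<Longrightarrow> 1\<^sub>m (length L) = word_mat (\<lambda>w v. if w = v then 1 else 0) L"
  by (rule eq_matI) (auto simp: word_mat_def nth_eq_iff_index_eq)

lemma smult_smult_mat: "a \<cdot>\<^sub>m (b \<cdot>\<^sub>m A) = (a * b :: 'a :: semigroup_mult) \<cdot>\<^sub>m A"
  by (rule eq_matI) (auto simp: mult.assoc)

lemma one_smult_mat [simp]: "(1 :: 'a :: monoid_mult) \<cdot>\<^sub>m A = A"
  by (rule eq_matI) auto

lemma smult_mult_smult_mat:
  fixes A B :: "'a :: comm_semiring_0 mat"
  assumes "A \<in> carrier_mat n n" "B \<in> carrier_mat n n"
  shows "(a \<cdot>\<^sub>m A) * (b \<cdot>\<^sub>m B) = (a * b) \<cdot>\<^sub>m (A * B)"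
  using assms
  by (simp add: mult_smult_assoc_mat[of _ n n] mult_smult_distrib[of _ n n] smult_smult_mat
      mult.commute)

lemma smult_mult_smult_mult_smult_mat:
  fixes A B C :: "'a :: comm_semiring_0 mat"
  assumes "A \<in> carrier_mat n n" "B \<in> carrier_mat n n" "C \<in> carrier_mat n n"
  shows "(a \<cdot>\<^sub>m A) * (b \<cdot>\<^sub>m B) * (c \<cdot>\<^sub>m C) = (a * b * c) \<cdot>\<^sub>m (A * B * C)"
  using assms by (simp add: smult_mult_smult_mat[of _ n])

lemma mset_eq_doubleton_iff: "mset w = {#x, y#} \<longleftrightarrow> w = [x, y] \<or> w = [y, x]"
proof
  assume "mset w = {#x, y#}"
  moreover from this have "length w = 2"
    by (metis size_mset size_add_mset size_empty One_nat_def Suc_1)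
  then obtain u v where "w = [u, v]"
    by (auto simp: numeral_2_eq_2 length_Suc_conv)
  ultimately show "w = [x, y] \<or> w = [y, x]"
    by (auto simp: add_eq_conv_ex)
qed auto

lemma mset_eq_triple_iff:
  "mset w = {#x, y, z#} \<longleftrightarrow> w \<in> {[x,y,z], [x,z,y], [y,x,z], [y,z,x], [z,x,y], [z,y,x]}"
proof
  assume w: "mset w = {#x, y, z#}"
  then obtain u w' where "w = u # w'"
    by (cases w) auto
  with w show "w \<in> {[x,y,z], [x,z,y], [y,x,z], [y,z,x], [z,x,y], [z,y,x]}"
    by (auto simp: add_eq_conv_ex mset_eq_doubleton_iff add_mset_commute)
qed (auto simp: add_mset_commute)

lemma rearr_eqI:
  assumes "set ws = {[i,j,k], [i,k,j], [j,i,k], [j,k,i], [k,i,j], [k,j,i]}" "sorted ws" "distinct ws"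
  shows "rearr i j k = ws"
proof -
  have "rearr i j k = sorted_list_of_set (set ws)"
    unfolding rearr_def mset_eq_triple_iff Collect_mem_eq assms(1) ..
  also have "\<dots> = ws"
    using assms(2,3) by (rule sorted_list_of_set.idem_if_sorted_distinct)
  finally show ?thesis .
qed

lemma rearr_cases:
  obtains (distinct) a b c where "a < b" "b < c"
      "rearr i j k = [[a,b,c], [a,c,b], [b,a,c], [b,c,a], [c,a,b], [c,b,a]]"
  | (low_pair) a b where "a < b" "rearr i j k = [[a,a,b], [a,b,a], [b,a,a]]"
  | (high_pair) a b where "a < b" "rearr i j k = [[a,b,b], [b,a,b], [b,b,a]]"
  | (triple) a where "rearr i j k = [[a,a,a]]"
proof -
  define s where "s = sort [i, j, k]"
  have "length s = 3"
    by (simp add: s_def)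
  then obtain a b c where abc: "s = [a, b, c]"
    by (auto simp: numeral_3_eq_3 length_Suc_conv)
  have "sorted s"
    by (simp add: s_def)
  then have "a \<le> b" "b \<le> c"
    by (simp_all add: abc)
  have "mset s = mset [i, j, k]"
    by (simp add: s_def)
  then have rearr_sorted: "rearr i j k = rearr a b c"
    by (simp add: abc rearr_def)
  consider "a < b" "b < c" | "a < b" "b = c" | "a = b" "b < c" | "a = b" "b = c"
    using \<open>a \<le> b\<close> \<open>b \<le> c\<close> by linarith
  then show ?thesis
  proof cases
    case 1
    then show ?thesis
      by (intro distinct[of a b c]) (auto simp: rearr_sorted intro!: rearr_eqI)
  next
    case 2
    then show ?thesis
      by (intro high_pair[of a c]) (auto simp: rearr_sorted intro!: rearr_eqI)
  next
    case 3
    then show ?thesis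
      by (intro low_pair[of a c]) (auto simp: rearr_sorted intro!: rearr_eqI)
  next
    case 4
    then show ?thesis
      by (intro triple[of a]) (auto simp: rearr_sorted intro!: rearr_eqI)
  qed
qed

lemma distinct_rearr: "distinct (rearr i j k)"
  by (simp add: rearr_def)

lemma R_numer_unitarity_right:
  "word_mat (kron_I_right (R_numer p y x)) (rearr i j k)
     * word_mat (kron_I_right (R_numer p x y)) (rearr i j k)
   = (R_denom p y x * R_denom p x y) \<cdot>\<^sub>m 1\<^sub>m (length (rearr i j k))"
  unfolding word_mat_mult one_mat_eq_word_mat[OF distinct_rearr] smult_word_mat
  by (cases i j k rule: rearr_cases;
      simp add: word_mat_eq_iff R_denom_def; (intro conjI)?; simp add: algebra_simps)

lemma R_numer_unitarity_left:
  "word_mat (kron_I_left (R_numer p y x)) (rearr i j k)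
     * word_mat (kron_I_left (R_numer p x y)) (rearr i j k)
   = (R_denom p y x * R_denom p x y) \<cdot>\<^sub>m 1\<^sub>m (length (rearr i j k))"
  unfolding word_mat_mult one_mat_eq_word_mat[OF distinct_rearr] smult_word_mat
  by (cases i j k rule: rearr_cases;
      simp add: word_mat_eq_iff R_denom_def; (intro conjI)?; simp add: algebra_simps)

lemma R_numer_yang_baxter:
  "word_mat (kron_I_right (R_numer p z y)) (rearr i j k)
     * word_mat (kron_I_left (R_numer p z x)) (rearr i j k)
     * word_mat (kron_I_right (R_numer p y x)) (rearr i j k)
   = word_mat (kron_I_left (R_numer p y x)) (rearr i j k)
     * word_mat (kron_I_right (R_numer p z x)) (rearr i j k)
     * word_mat (kron_I_left (R_numer p z y)) (rearr i j k)"
  unfolding word_mat_mult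
  by (cases i j k rule: rearr_cases;
      simp add: word_mat_eq_iff; (intro conjI)?; simp add: algebra_simps)

lemma submat3_kron_I_right_Rmat:
  "submat3 (kron_I_right (Rmat p y x)) i j k
   = (1 / Dden p y x) \<cdot>\<^sub>m word_mat (kron_I_right (R_numer (of_real p) y x)) (rearr i j k)"
  by (simp add: submat3_eq_word_mat smult_word_mat word_mat_eq_iff kron_I_right_def
      Rmat_eq_R_numer_div)

lemma submat3_kron_I_left_Rmat:
  "submat3 (kron_I_left (Rmat p y x)) i j k
   = (1 / Dden p y x) \<cdot>\<^sub>m word_mat (kron_I_left (R_numer (of_real p) y x)) (rearr i j k)"
  by (simp add: submat3_eq_word_mat smult_word_mat word_mat_eq_iff kron_I_left_def
      Rmat_eq_R_numer_div)

lemma submat3_unitarity: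
  assumes "Dden p y x \<noteq> 0" "Dden p x y \<noteq> 0"
  shows "submat3 (kron_I_right (Rmat p y x)) i j k * submat3 (kron_I_right (Rmat p x y)) i j k
           = 1\<^sub>m (length (rearr i j k))"
    and "submat3 (kron_I_left (Rmat p y x)) i j k * submat3 (kron_I_left (Rmat p x y)) i j k
           = 1\<^sub>m (length (rearr i j k))"
  using assms
  by (simp_all add: submat3_kron_I_right_Rmat submat3_kron_I_left_Rmat
      smult_mult_smult_mat[OF word_mat_carrier word_mat_carrier]
      R_numer_unitarity_right R_numer_unitarity_left smult_smult_mat Dden_eq_R_denom)

(* No denominator needs to be nonzero: both sides carry the same scalar factor. *)

lemma submat3_yang_baxter:
  "submat3 (kron_I_right (Rmat p z y)) i j k
     * submat3 (kron_I_left (Rmat p z x)) i j k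
     * submat3 (kron_I_right (Rmat p y x)) i j k
   = submat3 (kron_I_left (Rmat p y x)) i j k
     * submat3 (kron_I_right (Rmat p z x)) i j k
     * submat3 (kron_I_left (Rmat p z y)) i j k"
  by (simp add: submat3_kron_I_right_Rmat submat3_kron_I_left_Rmat R_numer_yang_baxter
      smult_mult_smult_mult_smult_mat[OF word_mat_carrier word_mat_carrier word_mat_carrier]
      ac_simps)

theorem mainTheorem3:
  fixes p :: real and N i j k :: nat and xi :: "'idx \<Rightarrow> complex" and \<alpha> \<beta> \<gamma> :: 'idx
  assumes "0 < p" "p < 1" "N \<ge> 1"
    and "i \<in> {1..N}" "j \<in> {1..N}" "k \<in> {1..N}"
    and "\<alpha> \<noteq> \<beta>" "\<beta> \<noteq> \<gamma>" "\<alpha> \<noteq> \<gamma>"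
    and "xi \<alpha> \<noteq> 0" "xi \<beta> \<noteq> 0" "xi \<gamma> \<noteq> 0"
  shows "(Dden p (xi \<beta>) (xi \<alpha>) \<noteq> 0 \<and> Dden p (xi \<alpha>) (xi \<beta>) \<noteq> 0 \<longrightarrow>
           submat3 (kron_I_right (Rmat p (xi \<beta>) (xi \<alpha>))) i j k
             * submat3 (kron_I_right (Rmat p (xi \<alpha>) (xi \<beta>))) i j k
             = 1\<^sub>m (length (rearr i j k))
         \<and> submat3 (kron_I_left (Rmat p (xi \<beta>) (xi \<alpha>))) i j k
             * submat3 (kron_I_left (Rmat p (xi \<alpha>) (xi \<beta>))) i j k
             = 1\<^sub>m (length (rearr i j k)))
       \<and> (Dden p (xi \<gamma>) (xi \<beta>) \<noteq> 0 \<and> Dden p (xi \<gamma>) (xi \<alpha>) \<noteq> 0 \<and> Dden p (xi \<beta>) (xi \<alpha>) \<noteq> 0 \<longrightarrow>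
           submat3 (kron_I_right (Rmat p (xi \<gamma>) (xi \<beta>))) i j k
             * submat3 (kron_I_left (Rmat p (xi \<gamma>) (xi \<alpha>))) i j k
             * submat3 (kron_I_right (Rmat p (xi \<beta>) (xi \<alpha>))) i j k
           = submat3 (kron_I_left (Rmat p (xi \<beta>) (xi \<alpha>))) i j k
             * submat3 (kron_I_right (Rmat p (xi \<gamma>) (xi \<alpha>))) i j k
             * submat3 (kron_I_left (Rmat p (xi \<gamma>) (xi \<beta>))) i j k)"
  using submat3_unitarity submat3_yang_baxter by blast

end
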